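(* Let $\mu$ be a probability measure on $\mathbb{R}$ and let $x^\ast\in(-\infty,+\infty]$ be the right endpoint of $\mathrm{supp}(\mu)$. Then \[ \lim_{x\to x^\ast}\frac{-\log\mu([x,\infty))}{\Lambda_\mu^\ast(x)}=1 \] if and only if there exist $a<x^\ast$ and a convex function $V:(a,x^\ast)\to\mathbb{R}$ such that $\lim_{x\to x^\ast}\frac{-\log\mu([x,\infty))}{V(x)}=1$.
   Context: For $X\sim\mu$: $\Lambda_\mu(t)=\log\mathbb{E}e^{tX}$ and $\Lambda_\mu^\ast(x)=\sup_{t\in\mathbb{R}}(tx-\Lambda_\mu(t))$ is the Cramér transform of $\mu$. Limits $x\to x^\ast$ are taken from the left. *)

theory Defs
  imports "HOL-Probability.Probability"
begin

definition log_mgf :: "real measure \<Rightarrow> real \<Rightarrow> ereal" where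
  "log_mgf M t =
     (let I = (\<integral>\<^sup>+ y. ennreal (exp (t * y)) \<partial>M)
      in if I = \<infinity> then \<infinity> else ereal (ln (enn2real I)))"

definition cramer :: "real measure \<Rightarrow> real \<Rightarrow> ereal" where
  "cramer M x = (SUP t. ereal (t * x) - log_mgf M t)"

definition msupport :: "real measure \<Rightarrow> real set" where
  "msupport M = {x. \<forall>e>0. emeasure M (ball x e) > 0}"

definition right_end :: "real measure \<Rightarrow> ereal" where
  "right_end M = Sup (ereal ` msupport M)"

definition to_right_end :: "ereal \<Rightarrow> real filter" where
  "to_right_end xs = (if xs = \<infinity> then at_top else at_left (real_of_ereal xs))"

end

theory Submission
  imports Defs
begin

text \<open>
  Write \<open>I(x) = -log \<mu>([x,\<infinity>))\<close>. The Cramer transform is a supremum of affine functions, hence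
  convex; near \<open>x\<^sup>*\<close> it is finite and positive and can itself serve as \<open>V\<close>.

  Conversely, Chernoff's inequality bounds every term \<open>t x - \<Lambda>(t)\<close> with \<open>t \<ge> 0\<close> by \<open>I(x)\<close>, and the
  mass to the left of a fixed point bounds the terms with \<open>t < 0\<close>, so eventually \<open>\<Lambda>\<^sup>* \<le> I\<close>.
  For the lower bound there are two cases. If \<open>I\<close> stays bounded, \<open>x\<^sup>*\<close> is an atom and both
  \<open>I(x)\<close> and \<open>\<Lambda>\<^sup>*(x)\<close> approach \<open>-log \<mu>{x\<^sup>*}\<close>. If \<open>I \<rightarrow> \<infinity>\<close>, then \<open>(1 - \<eta>) V\<close> is a convex
  minorant of \<open>I\<close>; its supporting line at \<open>x\<close> yields an exponential tail bound, which controls the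
  moment generating function at \<open>(1 - \<eta>)\<close> times the slope and gives
  \<open>\<Lambda>\<^sup>*(x) \<ge> (1 - \<eta>)\<^sup>3 I(x) - C\<^sub>\<eta>\<close>.
\<close>

lemma convex_on_supporting_line:
  fixes f :: "real \<Rightarrow> real"
  assumes f: "convex_on S f" and x: "x \<in> S" and l: "l \<in> S" "l < x" and r: "r \<in> S" "x < r"
  obtains \<sigma> where "\<And>y. y \<in> S \<Longrightarrow> f x + \<sigma> * (y - x) \<le> f y"
proof -
  have slopes: "(f x - f y) / (x - y) \<le> (f w - f x) / (w - x)"
    if "y \<in> S" "y < x" "w \<in> S" "x < w" for y w
  proof -
    have "(f y - f x) / (y - x) \<le> (f y - f w) / (y - w)"
      using convex_on_slope_le(1)[OF f that(1) that(3)] that by simp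
    also have "\<dots> \<le> (f x - f w) / (x - w)"
      using convex_on_slope_le(2)[OF f that(1) that(3)] that by simp
    finally show ?thesis
      by (metis minus_diff_eq minus_divide_divide)
  qed
  define L where "L = {(f x - f y) / (x - y) | y. y \<in> S \<and> y < x}"
  have L_ne: "L \<noteq> {}" using l unfolding L_def by auto
  have L_bdd: "bdd_above L" unfolding L_def bdd_above_def using slopes[OF _ _ r] by auto
  have "f x + Sup L * (y - x) \<le> f y" if y: "y \<in> S" for y
  proof (cases y x rule: linorder_cases)
    case less
    have "(f x - f y) / (x - y) \<le> Sup L"
      using y less by (intro cSup_upper L_bdd) (auto simp: L_def)
    thus ?thesis using less by (simp add: divide_le_eq algebra_simps)
  next
    case greater
    have "Sup L \<le> (f y - f x) / (y - x)"
      using slopes[OF _ _ y greater] by (intro cSup_least L_ne) (auto simp: L_def)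
    thus ?thesis using greater by (simp add: le_divide_eq algebra_simps)
  qed simp
  thus thesis by (rule that)
qed

lemma convex_ereal_interval: "convex {x::real. a < ereal x \<and> ereal x < b}"
  unfolding is_interval_convex_1[symmetric] is_interval_1
  by auto (meson ereal_less_eq(3) le_less_trans less_le_trans)+

lemma suminf_ennreal_geometric:
  assumes "0 \<le> A" "0 \<le> r" "r < 1"
  shows "(\<Sum>k. ennreal (A * r ^ k)) = ennreal (A / (1 - r))"
  using assms sums_mult[OF geometric_sums[of r], of A] by (intro suminf_ennreal_eq) auto

lemma tendsto_ratio_oneD:
  fixes f g :: "'a \<Rightarrow> real"
  assumes lim: "((\<lambda>x. f x / g x) \<longlongrightarrow> 1) F" and nonneg: "eventually (\<lambda>x. 0 \<le> f x) F"
    and \<delta>: "0 < \<delta>" "\<delta> < 1"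
  shows "eventually (\<lambda>x. 0 < f x \<and> 0 < g x \<and> (1 - \<delta>) * g x \<le> f x \<and> f x \<le> (1 + \<delta>) * g x) F"
proof -
  have "eventually (\<lambda>x. 1 - \<delta> < f x / g x) F" by (rule order_tendstoD(1)[OF lim]) (use \<delta> in simp)
  moreover have "eventually (\<lambda>x. f x / g x < 1 + \<delta>) F" by (rule order_tendstoD(2)[OF lim]) (use \<delta> in simp)
  ultimately show ?thesis using nonneg
  proof eventually_elim
    case (elim x)
    have ratio: "0 < f x / g x" using elim \<delta> by linarith
    hence g: "0 < g x" using elim(3) by (simp add: zero_less_divide_iff)
    moreover have "0 < f x" using ratio g by (simp add: zero_less_divide_iff)
    ultimately show ?case using elim \<delta> by (auto simp: less_divide_eq divide_less_eq zero_less_divide_iff)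
  qed
qed

lemma tendsto_ereal_ratio_one:
  fixes f :: "'a \<Rightarrow> real" and g :: "'a \<Rightarrow> ereal"
  assumes upper: "eventually (\<lambda>x. 0 < f x \<and> g x \<le> ereal (f x)) F"
    and lower: "\<And>e. 0 < e \<Longrightarrow> e < 1 \<Longrightarrow> eventually (\<lambda>x. ereal ((1 - e) * f x) \<le> g x) F"
  shows "((\<lambda>x. ereal (f x) / g x) \<longlongrightarrow> ereal 1) F"
proof -
  define h where "h x = real_of_ereal (g x)" for x
  have bounds: "eventually (\<lambda>x. 0 < f x \<and> g x = ereal (h x) \<and> (1 - e) * f x \<le> h x \<and> h x \<le> f x) F"
    if "0 < e" "e < 1" for e
    using upper lower[OF that]
  proof eventually_elim
    case (elim x)
    then obtain v where "g x = ereal v" by (cases "g x") auto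
    with elim show ?case by (simp add: h_def)
  qed
  have "((\<lambda>x. h x / f x) \<longlongrightarrow> 1) F"
  proof (rule tendstoI)
    fix \<epsilon> :: real assume "0 < \<epsilon>"
    define e where "e = min (\<epsilon> / 2) (1 / 2)"
    have e: "0 < e" "e < 1" "e < \<epsilon>" unfolding e_def using \<open>0 < \<epsilon>\<close> by auto
    show "eventually (\<lambda>x. dist (h x / f x) 1 < \<epsilon>) F"
      using bounds[OF e(1,2)]
    proof eventually_elim
      case (elim x)
      hence "\<bar>h x / f x - 1\<bar> \<le> e" by (simp add: field_simps abs_le_iff)
      thus ?case using e by (simp add: dist_real_def)
    qed
  qed
  hence "((\<lambda>x. inverse (h x / f x)) \<longlongrightarrow> inverse 1) F"
    by (intro tendsto_inverse) auto
  hence "((\<lambda>x. ereal (f x / h x)) \<longlongrightarrow> ereal 1) F"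
    by (intro tendsto_ereal) simp
  moreover have "eventually (\<lambda>x. ereal (f x / h x) = ereal (f x) / g x) F"
    using bounds[of "1/2", simplified] by (rule eventually_mono) auto
  ultimately show ?thesis by (rule Lim_transform_eventually)
qed

lemma pos_real_of_ereal_ratio:
  assumes "ereal (1 / 2) < ereal r / C" "ereal r / C < ereal 2" "0 \<le> C"
  shows "\<exists>v>0. C = ereal v"
proof (cases C)
  case (real v)
  have "v \<noteq> 0"
  proof
    assume "v = 0"
    hence "ereal r / C = ereal r * \<infinity>" using real by simp
    thus False using assms(1,2) by (cases "r > 0"; cases "r = 0") auto
  qed
  thus ?thesis using real assms(3) by auto
qed (use assms in auto)

lemma exp_le_grid_indicators:
  fixes t z w :: real
  assumes t: "0 < t"
  shows "ennreal (exp (t * w)) \<le> ennreal (exp (t * z)) * indicator {..<z} w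
           + (\<Sum>k. ennreal (exp (t * z + real (Suc k))) * indicator {z + real k / t..<z + real (Suc k) / t} w)"
proof (cases "w < z")
  case True
  hence "ennreal (exp (t * w)) \<le> ennreal (exp (t * z)) * indicator {..<z} w" using t by simp
  thus ?thesis by (rule add_increasing2[OF zero_le])
next
  case False
  define G where "G k = ennreal (exp (t * z + real (Suc k))) * indicator {z + real k / t..<z + real (Suc k) / t} w" for k
  define k where "k = nat \<lfloor>t * (w - z)\<rfloor>"
  have "0 \<le> t * (w - z)" using False t by simp
  hence k: "real k \<le> t * (w - z)" "t * (w - z) < real k + 1" unfolding k_def by (simp_all add: of_nat_nat)
  hence "z + real k / t \<le> w" "w < z + real (Suc k) / t" using t by (simp_all add: field_simps)
  moreover have "exp (t * w) \<le> exp (t * z + real (Suc k))" using k(2) by (simp add: algebra_simps)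
  ultimately have "ennreal (exp (t * w)) \<le> G k" unfolding G_def by simp
  also have "\<dots> \<le> (\<Sum>k. G k)" using sum_le_suminf[of G "{k}"] by (simp add: summableI)
  finally show ?thesis unfolding G_def by (rule add_increasing[OF zero_le])
qed

definition mgf :: "real measure \<Rightarrow> real \<Rightarrow> ennreal" where
  "mgf M t = (\<integral>\<^sup>+ y. ennreal (exp (t * y)) \<partial>M)"

definition tail_rate :: "real measure \<Rightarrow> real \<Rightarrow> real" where
  "tail_rate M x = - ln (measure M {x..})"

lemma log_mgf_eq_ln_mgf: "mgf M t \<noteq> \<infinity> \<Longrightarrow> log_mgf M t = ereal (ln (enn2real (mgf M t)))"
  unfolding log_mgf_def mgf_def[symmetric] by (simp add: Let_def)

lemma log_mgf_eq_infinity: "mgf M t = \<infinity> \<Longrightarrow> log_mgf M t = \<infinity>"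
  unfolding log_mgf_def mgf_def[symmetric] by (simp add: Let_def)

lemma cramer_ge_term: "ereal (t * x) - log_mgf M t \<le> cramer M x"
  unfolding cramer_def by (rule SUP_upper) auto

lemma convex_on_cramer:
  assumes S: "convex S" and V: "\<And>x. x \<in> S \<Longrightarrow> cramer M x = ereal (V x)"
  shows "convex_on S V"
proof (rule convex_onI)
  fix s x y :: real assume s: "0 < s" "s < 1" and xy: "x \<in> S" "y \<in> S"
  define z where "z = (1 - s) *\<^sub>R x + s *\<^sub>R y"
  have "z \<in> S" using S xy s unfolding z_def by (simp add: convex_alt)
  have "cramer M z \<le> ereal ((1 - s) * V x + s * V y)"
    unfolding cramer_def
  proof (rule SUP_least)
    fix t :: real
    show "ereal (t * z) - log_mgf M t \<le> ereal ((1 - s) * V x + s * V y)"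
    proof (cases "mgf M t = \<infinity>")
      case True thus ?thesis by (simp add: log_mgf_eq_infinity)
    next
      case False
      define l where "l = ln (enn2real (mgf M t))"
      have l: "log_mgf M t = ereal l" using log_mgf_eq_ln_mgf[OF False] by (simp add: l_def)
      have "t * x - l \<le> V x" "t * y - l \<le> V y"
        using cramer_ge_term[of t _ M] V xy l by (metis ereal_minus(1) ereal_less_eq(3))+
      hence "(1 - s) * (t * x - l) + s * (t * y - l) \<le> (1 - s) * V x + s * V y"
        using s by (intro add_mono mult_left_mono) auto
      moreover have "t * z - l = (1 - s) * (t * x - l) + s * (t * y - l)"
        unfolding z_def by (simp add: algebra_simps)
      ultimately show ?thesis using l by simp
    qed
  qed
  thus "V ((1 - s) *\<^sub>R x + s *\<^sub>R y) \<le> (1 - s) * V x + s * V y"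
    using V[OF \<open>z \<in> S\<close>] unfolding z_def by simp
qed (rule S)

lemma msupport_le_right_end: "x \<in> msupport M \<Longrightarrow> ereal x \<le> right_end M"
  unfolding right_end_def by (rule Sup_upper) auto

context real_distribution
begin

lemma null_sets_compl_msupport: "- msupport M \<in> null_sets M"
proof -
  define \<B> where "\<B> = {ball z e | z e. 0 < e \<and> emeasure M (ball z e) = 0}"
  have compl: "- msupport M = \<Union>\<B>"
  proof (intro equalityI subsetI)
    fix x assume "x \<in> - msupport M"
    then obtain e where "0 < e" "emeasure M (ball x e) = 0"
      unfolding msupport_def by auto
    thus "x \<in> \<Union>\<B>" unfolding \<B>_def by force
  next
    fix x assume "x \<in> \<Union>\<B>"
    then obtain z e where ze: "x \<in> ball z e" "emeasure M (ball z e) = 0" unfolding \<B>_def by auto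
    obtain d where d: "0 < d" "ball x d \<subseteq> ball z e" using openE[OF open_ball ze(1)] .
    have "emeasure M (ball x d) \<le> emeasure M (ball z e)"
      using d by (intro emeasure_mono) auto
    thus "x \<in> - msupport M" using d ze unfolding msupport_def by auto
  qed
  have open_\<B>: "open B" if "B \<in> \<B>" for B using that unfolding \<B>_def by auto
  obtain \<B>' where \<B>': "\<B>' \<subseteq> \<B>" "countable \<B>'" "\<Union>\<B>' = \<Union>\<B>"
    using Lindelof[of \<B>, OF open_\<B>] by blast
  have null_\<B>: "B \<in> null_sets M" if "B \<in> \<B>" for B
    using that unfolding \<B>_def by (auto simp: null_sets_def intro: borel_open)
  have "(\<Union>B\<in>\<B>'. B) \<in> null_sets M"
    using \<B>' null_\<B> by (intro null_sets_UN') auto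
  thus ?thesis using compl \<B>' by simp
qed

lemma measure_atLeast_pos: assumes "ereal x < right_end M" shows "0 < measure M {x..}"
proof -
  obtain y where y: "y \<in> msupport M" "ereal x < ereal y"
    using assms unfolding right_end_def less_Sup_iff by auto
  hence "0 < emeasure M (ball y (y - x))" unfolding msupport_def by auto
  also have "\<dots> \<le> emeasure M {x..}"
    by (intro emeasure_mono) (auto simp: dist_real_def)
  finally show ?thesis by (simp add: emeasure_eq_measure)
qed

lemma right_end_neq_MInf: "right_end M \<noteq> -\<infinity>"
proof
  assume "right_end M = -\<infinity>"
  hence "msupport M = {}" using msupport_le_right_end by fastforce
  hence "space M \<in> null_sets M" using null_sets_compl_msupport by simp
  thus False using emeasure_space_1 by (simp add: null_sets_def)
qed

lemma AE_le_right_end: assumes "right_end M = ereal u" shows "AE y in M. y \<le> u"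
proof (rule AE_I'[OF null_sets_compl_msupport])
  show "{y \<in> space M. \<not> y \<le> u} \<subseteq> - msupport M"
    using assms msupport_le_right_end by fastforce
qed

abbreviation at_right_end :: "real filter" where
  "at_right_end \<equiv> to_right_end (right_end M)"

lemma eventually_at_right_end:
  "eventually P at_right_end \<longleftrightarrow>
     (\<exists>b. ereal b < right_end M \<and> (\<forall>x. b < x \<longrightarrow> ereal x < right_end M \<longrightarrow> P x))"
proof (cases "right_end M")
  case (real u)
  thus ?thesis by (auto simp: to_right_end_def eventually_at_left_field)
next
  case PInf
  thus ?thesis by (auto simp: to_right_end_def eventually_at_top_dense)
qed (use right_end_neq_MInf in auto)

lemma ex_less_right_end: obtains b where "ereal b < right_end M"
proof (cases "right_end M")
  case (real u) thus ?thesis using that[of "u - 1"] by simp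
next
  case PInf thus ?thesis using that[of 0] by simp
qed (use right_end_neq_MInf in auto)

lemma at_right_end_neq_bot: "at_right_end \<noteq> bot"
  by (cases "right_end M") (use right_end_neq_MInf in \<open>auto simp: to_right_end_def\<close>)

lemma eventually_gt_at_right_end: "ereal b < right_end M \<Longrightarrow> eventually (\<lambda>x. b < x) at_right_end"
  unfolding eventually_at_right_end by auto

lemma eventually_less_right_end: "eventually (\<lambda>x. ereal x < right_end M) at_right_end"
  using ex_less_right_end unfolding eventually_at_right_end by blast

lemma tendsto_measure_atLeast_at_left: "((\<lambda>x. measure M {x..}) \<longlongrightarrow> measure M {u..}) (at_left u)"
proof (rule tendsto_at_left_sequentially[of "u - 1"])
  fix f :: "nat \<Rightarrow> real" assume f: "\<And>n. f n < u" "incseq f" "f \<longlonglongrightarrow> u"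
  have "(\<lambda>n. measure M {f n..}) \<longlonglongrightarrow> measure M (\<Inter>n. {f n..})"
    using f(2) by (intro finite_Lim_measure_decseq) (auto simp: decseq_def incseq_def)
  moreover have "(\<Inter>n. {f n..}) = {u..}"
  proof (intro equalityI subsetI)
    fix y assume "y \<in> (\<Inter>n. {f n..})"
    thus "y \<in> {u..}" using LIMSEQ_le_const2[OF f(3), of y] by auto
  qed (use f(1) in \<open>auto intro: less_imp_le order_trans\<close>)
  ultimately show "(\<lambda>n. measure M {f n..}) \<longlonglongrightarrow> measure M {u..}" by simp
qed simp

lemma measure_atLeast_less: assumes "0 < p" obtains y where "measure M {y..} < p"
proof -
  obtain y where "1 - p < cdf M y"
    using order_tendstoD(1)[OF cdf_lim_at_top_prob, of "1 - p"] \<open>0 < p\<close>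
    by (auto simp: eventually_at_top_linorder)
  moreover have "measure M {y<..} = 1 - cdf M y"
    using prob_compl[of "{..y}"] by (simp add: cdf_def Compl_eq_Diff_UNIV[symmetric] flip: Compl_atMost)
  moreover have "measure M {y + 1..} \<le> measure M {y<..}" by (intro finite_measure_mono) auto
  ultimately show thesis using that[of "y + 1"] by linarith
qed

lemma measure_atLeast_eq_exp: "ereal x < right_end M \<Longrightarrow> measure M {x..} = exp (- tail_rate M x)"
  using measure_atLeast_pos unfolding tail_rate_def by simp

lemma tail_rate_nonneg: "ereal x < right_end M \<Longrightarrow> 0 \<le> tail_rate M x"
  using measure_atLeast_pos[of x] unfolding tail_rate_def by (simp add: ln_le_zero_iff)

lemma tail_rate_mono: assumes "c \<le> x" "ereal x < right_end M" shows "tail_rate M c \<le> tail_rate M x"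
proof -
  have "measure M {x..} \<le> measure M {c..}" using assms by (intro finite_measure_mono) auto
  thus ?thesis using measure_atLeast_pos[OF assms(2)] unfolding tail_rate_def by simp
qed

text \<open>Since \<open>ln 0 = 0\<close>, a positive tail rate forces \<open>0 < \<mu>([c,\<infinity>)) < 1\<close>.\<close>

lemma measure_atMost_pos: assumes "0 < tail_rate M c" shows "0 < measure M {..c}"
proof -
  have "measure M {c..} \<noteq> 0" using assms unfolding tail_rate_def by auto
  hence "0 < measure M {c..}" by (simp add: order_less_le)
  hence "measure M {c..} < 1" using assms unfolding tail_rate_def by simp
  moreover have "measure M {..<c} = 1 - measure M {c..}"
    using prob_compl[of "{c..}"] by (simp add: Compl_eq_Diff_UNIV[symmetric] flip: Compl_atLeast)
  moreover have "measure M {..<c} \<le> measure M {..c}" by (intro finite_measure_mono) auto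
  ultimately show ?thesis by linarith
qed

lemma mgf_pos: "0 < mgf M t"
proof -
  have "mgf M t \<noteq> 0"
  proof
    assume "mgf M t = 0"
    hence "AE y in M. ennreal (exp (t * y)) = 0"
      unfolding mgf_def by (subst (asm) nn_integral_0_iff_AE) auto
    thus False by (simp add: AE_False)
  qed
  thus ?thesis by (simp add: zero_less_iff_neq_zero)
qed

lemma cramer_nonneg: "0 \<le> cramer M x"
proof -
  have "mgf M 0 = 1" unfolding mgf_def using emeasure_space_1 by simp
  hence "log_mgf M 0 = 0" using log_mgf_eq_ln_mgf[of M 0] by simp
  thus ?thesis using cramer_ge_term[of 0 x M] by (simp add: zero_ereal_def)
qed

lemma cramer_ge_of_mgf_le: assumes "mgf M t \<le> ennreal R" shows "ereal (t * x - ln R) \<le> cramer M x"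
proof -
  have fin: "mgf M t \<noteq> \<infinity>" using assms by (auto simp: top_unique)
  have "0 < ennreal R" using mgf_pos[of t] assms by (rule less_le_trans)
  hence "0 < R" by simp
  have "0 < enn2real (mgf M t)"
    using mgf_pos[of t] fin by (simp add: enn2real_positive_iff top.not_eq_extremum)
  moreover have "enn2real (mgf M t) \<le> R" using enn2real_mono[OF assms] \<open>0 < R\<close> by simp
  ultimately have "ln (enn2real (mgf M t)) \<le> ln R" by simp
  hence "ereal (t * x - ln R) \<le> ereal (t * x) - log_mgf M t"
    using log_mgf_eq_ln_mgf[OF fin] by simp
  thus ?thesis using cramer_ge_term order_trans by blast
qed

lemma cramer_term_le_of_mgf_ge:
  assumes "ennreal R \<le> mgf M t" "0 < R"
  shows "ereal (t * x) - log_mgf M t \<le> ereal (t * x - ln R)"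
proof (cases "mgf M t = \<infinity>")
  case True thus ?thesis by (simp add: log_mgf_eq_infinity)
next
  case False
  have "R \<le> enn2real (mgf M t)"
    using enn2real_mono[OF assms(1)] False assms(2) by (simp add: top.not_eq_extremum)
  hence "ln R \<le> ln (enn2real (mgf M t))" using assms(2) by simp
  thus ?thesis using log_mgf_eq_ln_mgf[OF False] by simp
qed

lemma mgf_ge_measure:
  assumes "A \<in> sets borel" "\<And>y. y \<in> A \<Longrightarrow> s \<le> t * y"
  shows "ennreal (exp s * measure M A) \<le> mgf M t"
proof -
  have "ennreal (exp s * measure M A) = (\<integral>\<^sup>+ y. ennreal (exp s) * indicator A y \<partial>M)"
    using assms(1) by (simp add: nn_integral_cmult_indicator emeasure_eq_measure ennreal_mult)
  also have "\<dots> \<le> mgf M t" unfolding mgf_def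
    by (intro nn_integral_mono) (auto simp: indicator_def assms(2))
  finally show ?thesis .
qed

lemma cramer_term_le_measure:
  assumes "A \<in> sets borel" "\<And>y. y \<in> A \<Longrightarrow> s \<le> t * y" "0 < measure M A"
  shows "ereal (t * x) - log_mgf M t \<le> ereal (t * x - s - ln (measure M A))"
proof -
  have "ereal (t * x) - log_mgf M t \<le> ereal (t * x - ln (exp s * measure M A))"
    using assms by (intro cramer_term_le_of_mgf_ge mgf_ge_measure) auto
  also have "ln (exp s * measure M A) = s + ln (measure M A)" using assms(3) by (simp add: ln_mult)
  finally show ?thesis by (simp add: algebra_simps)
qed

text \<open>Chernoff's bound settles every \<open>t \<ge> 0\<close>, so only the terms with \<open>t < 0\<close> remain to be controlled.\<close>

lemma cramer_le_max_tail_rate: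
  assumes "0 < measure M {x..}" and neg: "\<And>t. t < 0 \<Longrightarrow> ereal (t * x) - log_mgf M t \<le> ereal G"
  shows "cramer M x \<le> ereal (max (tail_rate M x) G)"
  unfolding cramer_def
proof (rule SUP_least)
  fix t :: real
  show "ereal (t * x) - log_mgf M t \<le> ereal (max (tail_rate M x) G)"
  proof (cases "t < 0")
    case True thus ?thesis using neg[OF True] by (meson ereal_less_eq(3) max.cobounded2 order_trans)
  next
    case False
    have "ereal (t * x) - log_mgf M t \<le> ereal (t * x - t * x - ln (measure M {x..}))"
      using False assms(1) by (intro cramer_term_le_measure) (auto intro: mult_left_mono)
    also have "\<dots> \<le> ereal (max (tail_rate M x) G)" by (simp add: tail_rate_def)
    finally show ?thesis .
  qed
qed

lemma cramer_term_neg_le: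
  assumes "c \<le> x" "0 < measure M {..c}" "t < 0"
  shows "ereal (t * x) - log_mgf M t \<le> ereal (- ln (measure M {..c}))"
proof -
  have "ereal (t * x) - log_mgf M t \<le> ereal (t * x - t * c - ln (measure M {..c}))"
    using assms by (intro cramer_term_le_measure) (auto intro: mult_left_mono_neg)
  also have "\<dots> \<le> ereal (- ln (measure M {..c}))"
    using assms mult_left_mono_neg[of c x t] by simp
  finally show ?thesis .
qed

lemma measure_atMost_right_end: "right_end M = ereal u \<Longrightarrow> measure M {..u} = 1"
  using AE_le_right_end by (subst AE_in_set_eq_1[symmetric]) auto

lemma cramer_term_neg_le_atom:
  assumes u: "right_end M = ereal u" and cx: "c < x" "x < u" and m: "0 < measure M {..c}"
    and t: "t < 0"
  shows "ereal (t * x) - log_mgf M t \<le> ereal (- ln (measure M {..c}) * (u - x) / (u - c))"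
proof -
  define L where "L = - ln (measure M {..c})"
  define A where "A = (- t) * (u - x)"
  define B where "B = L - (- t) * (x - c)"
  define \<theta> where "\<theta> = (x - c) / (u - c)"
  have \<theta>: "0 \<le> \<theta>" "\<theta> \<le> 1" using cx unfolding \<theta>_def by auto
  have "ereal (t * x) - log_mgf M t \<le> ereal (t * x - t * u - ln (measure M {..u}))"
    using t by (intro cramer_term_le_measure) (auto intro: mult_left_mono_neg simp: measure_atMost_right_end[OF u])
  also have "t * x - t * u - ln (measure M {..u}) = A"
    unfolding A_def using measure_atMost_right_end[OF u] by (simp add: algebra_simps)
  finally have TA: "ereal (t * x) - log_mgf M t \<le> ereal A" .
  have "ereal (t * x) - log_mgf M t \<le> ereal (t * x - t * c - ln (measure M {..c}))"
    using t m by (intro cramer_term_le_measure) (auto intro: mult_left_mono_neg)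
  also have "t * x - t * c - ln (measure M {..c}) = B"
    unfolding B_def L_def by (simp add: algebra_simps)
  finally have TB: "ereal (t * x) - log_mgf M t \<le> ereal B" .
  have T: "ereal (t * x) - log_mgf M t \<le> ereal (min A B)"
    using TA TB by (simp add: min_def)
  have one_minus: "1 - \<theta> = (u - x) / (u - c)" using cx unfolding \<theta>_def by (simp add: field_simps)
  have N: "(x - c) * A + (u - x) * B = L * (u - x)" unfolding A_def B_def by (simp add: algebra_simps)
  \<comment> \<open>the minimum of the two bounds is at most their convex combination, which does not depend on \<open>t\<close>\<close>
  have "min A B \<le> \<theta> * A + (1 - \<theta>) * B"
  proof -
    have "\<theta> * min A B \<le> \<theta> * A" "(1 - \<theta>) * min A B \<le> (1 - \<theta>) * B"
      using \<theta> by (simp_all add: mult_left_mono)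
    thus ?thesis by (simp add: algebra_simps)
  qed
  also have "\<dots> = ((x - c) * A + (u - x) * B) / (u - c)"
    unfolding one_minus by (simp add: \<theta>_def add_divide_distrib)
  also have "\<dots> = L * (u - x) / (u - c)" by (simp only: N)
  finally have "min A B \<le> L * (u - x) / (u - c)" .
  hence "ereal (min A B) \<le> ereal (L * (u - x) / (u - c))" by (simp only: ereal_less_eq(3))
  with T show ?thesis unfolding L_def by (rule order_trans)
qed

lemma mgf_le_atom:
  assumes u: "right_end M = ereal u" and t: "0 < t" and d: "0 < d"
  shows "mgf M t \<le> ennreal (exp (t * u) * (exp (- t * d) + measure M {u - d..}))"
proof -
  have "mgf M t \<le> (\<integral>\<^sup>+ y. ennreal (exp (t * (u - d))) + ennreal (exp (t * u)) * indicator {u - d..} y \<partial>M)"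
    unfolding mgf_def
  proof (rule nn_integral_mono_AE)
    show "AE y in M. ennreal (exp (t * y)) \<le> ennreal (exp (t * (u - d))) + ennreal (exp (t * u)) * indicator {u - d..} y"
      using AE_le_right_end[OF u]
    proof eventually_elim
      case (elim y)
      show ?case
      proof (cases "u - d \<le> y")
        case True
        hence "exp (t * y) \<le> exp (t * u)" using elim t by simp
        thus ?thesis using True by (simp add: add_increasing)
      next
        case False
        hence "exp (t * y) \<le> exp (t * (u - d))" using t by simp
        thus ?thesis by (simp add: add_increasing2)
      qed
    qed
  qed
  also have "\<dots> = ennreal (exp (t * (u - d))) + ennreal (exp (t * u)) * emeasure M {u - d..}"
    using emeasure_space_1 by (subst nn_integral_add) (simp_all add: nn_integral_cmult_indicator)
  also have "\<dots> = ennreal (exp (t * u) * (exp (- t * d) + measure M {u - d..}))"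
    by (simp add: emeasure_eq_measure ennreal_mult'[symmetric] ennreal_plus[symmetric]
        distrib_left exp_add[symmetric] algebra_simps del: ennreal_plus)
  finally show ?thesis .
qed

lemma mgf_le_grid_sum:
  assumes t: "0 < t"
  shows "mgf M t \<le> ennreal (exp (t * z))
           + (\<Sum>k. ennreal (exp (t * z + real (Suc k)) * measure M {z + real k / t..}))"
proof -
  define y where "y k = z + real k / t" for k :: nat
  define g where "g k w = ennreal (exp (t * z + real (Suc k))) * indicator {y k..<y (Suc k)} w" for k w
  have g_meas: "g k \<in> borel_measurable M" for k unfolding g_def by measurable
  have "mgf M t \<le> (\<integral>\<^sup>+ w. ennreal (exp (t * z)) * indicator {..<z} w + (\<Sum>k. g k w) \<partial>M)"
    unfolding mgf_def g_def y_def by (intro nn_integral_mono exp_le_grid_indicators t)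
  also have "\<dots> = (\<integral>\<^sup>+ w. ennreal (exp (t * z)) * indicator {..<z} w \<partial>M) + (\<integral>\<^sup>+ w. (\<Sum>k. g k w) \<partial>M)"
    using g_meas by (intro nn_integral_add) auto
  finally have split: "mgf M t \<le> (\<integral>\<^sup>+ w. ennreal (exp (t * z)) * indicator {..<z} w \<partial>M)
                                 + (\<integral>\<^sup>+ w. (\<Sum>k. g k w) \<partial>M)" .
  have "(\<integral>\<^sup>+ w. ennreal (exp (t * z)) * indicator {..<z} w \<partial>M) = ennreal (exp (t * z)) * emeasure M {..<z}"
    by (intro nn_integral_cmult_indicator) simp
  also have "\<dots> \<le> ennreal (exp (t * z))"
    by (metis emeasure_le_1 mult.comm_neutral mult_left_mono zero_le)
  finally have below: "(\<integral>\<^sup>+ w. ennreal (exp (t * z)) * indicator {..<z} w \<partial>M) \<le> ennreal (exp (t * z))" .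
  have "(\<integral>\<^sup>+ w. (\<Sum>k. g k w) \<partial>M) = (\<Sum>k. \<integral>\<^sup>+ w. g k w \<partial>M)"
    using g_meas by (intro nn_integral_suminf) auto
  also have "\<dots> \<le> (\<Sum>k. ennreal (exp (t * z + real (Suc k)) * measure M {y k..}))"
  proof (intro suminf_le summableI allI)
    fix k
    have "(\<integral>\<^sup>+ w. g k w \<partial>M) = ennreal (exp (t * z + real (Suc k))) * emeasure M {y k..<y (Suc k)}"
      unfolding g_def by (intro nn_integral_cmult_indicator) simp
    also have "\<dots> \<le> ennreal (exp (t * z + real (Suc k))) * emeasure M {y k..}"
      by (intro mult_left_mono emeasure_mono) auto
    also have "\<dots> = ennreal (exp (t * z + real (Suc k)) * measure M {y k..})"
      by (simp add: emeasure_eq_measure ennreal_mult'[symmetric])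
    finally show "(\<integral>\<^sup>+ w. g k w \<partial>M) \<le> ennreal (exp (t * z + real (Suc k)) * measure M {y k..})" .
  qed
  finally have above: "(\<integral>\<^sup>+ w. (\<Sum>k. g k w) \<partial>M)
                         \<le> (\<Sum>k. ennreal (exp (t * z + real (Suc k)) * measure M {z + real k / t..}))"
    unfolding y_def .
  show ?thesis using split add_mono[OF below above] by (rule order_trans)
qed

lemma mgf_le_of_grid:
  assumes t: "0 < t" and c: "0 < c" and B: "0 \<le> B"
    and grid: "\<And>k::nat. exp (t * z + real k) * measure M {z + real k / t..} \<le> B * exp (- c * real k)"
  shows "mgf M t \<le> ennreal (exp (t * z) + exp 1 * B / (1 - exp (- c)))"
proof -
  have "(\<Sum>k. ennreal (exp (t * z + real (Suc k)) * measure M {z + real k / t..}))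
          \<le> (\<Sum>k. ennreal (exp 1 * B * exp (- c) ^ k))"
  proof (intro suminf_le summableI allI ennreal_leI)
    fix k :: nat
    have "exp (t * z + real (Suc k)) = exp 1 * exp (t * z + real k)" by (simp flip: exp_add)
    hence "exp (t * z + real (Suc k)) * measure M {z + real k / t..}
             = exp 1 * (exp (t * z + real k) * measure M {z + real k / t..})" by simp
    also have "\<dots> \<le> exp 1 * (B * exp (- c * real k))" using grid[of k] by (intro mult_left_mono) auto
    also have "exp (- c * real k) = exp (- c) ^ k" by (simp add: exp_of_nat_mult[symmetric] mult.commute)
    finally show "exp (t * z + real (Suc k)) * measure M {z + real k / t..} \<le> exp 1 * B * exp (- c) ^ k"
      by (simp add: mult.assoc)
  qed
  also have "\<dots> = ennreal (exp 1 * B / (1 - exp (- c)))"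
    using B c by (intro suminf_ennreal_geometric) auto
  finally have "mgf M t \<le> ennreal (exp (t * z)) + ennreal (exp 1 * B / (1 - exp (- c)))"
    by (rule order_trans[OF mgf_le_grid_sum[OF t] add_left_mono])
  also have "\<dots> = ennreal (exp (t * z) + exp 1 * B / (1 - exp (- c)))"
    using B c by (intro ennreal_plus[symmetric]) auto
  finally show ?thesis .
qed

lemma eventually_tail_rate_nonneg: "eventually (\<lambda>x. 0 \<le> tail_rate M x) at_right_end"
  using eventually_less_right_end by (rule eventually_mono) (rule tail_rate_nonneg)

lemma measure_atLeast_eq_0_of_filterlim:
  assumes fl: "filterlim (tail_rate M) at_top at_right_end" and y: "right_end M \<le> ereal y"
  shows "measure M {y..} = 0"
proof (rule ccontr)
  define m where "m = measure M {y..}"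
  assume "measure M {y..} \<noteq> 0"
  hence m: "0 < m" unfolding m_def by (simp add: zero_less_measure_iff)
  have "eventually (\<lambda>x. - ln (m / 2) \<le> tail_rate M x \<and> ereal x < right_end M) at_right_end"
    using fl eventually_less_right_end unfolding filterlim_at_top by (intro eventually_conj) auto
  then obtain x where x: "- ln (m / 2) \<le> tail_rate M x" "ereal x < right_end M"
    using eventually_happens'[OF at_right_end_neq_bot] by blast
  have "ereal x < ereal y" using x(2) y by (rule less_le_trans)
  hence "x \<le> y" by simp
  hence "m \<le> measure M {x..}" unfolding m_def by (intro finite_measure_mono) auto
  also have "\<dots> = exp (- tail_rate M x)" using measure_atLeast_eq_exp x(2) by simp
  also have "\<dots> \<le> exp (ln (m / 2))" using x(1) by simp
  also have "\<dots> = m / 2" using m by simp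
  finally show False using m by simp
qed

lemma cramer_le_tail_rate_of_filterlim:
  assumes fl: "filterlim (tail_rate M) at_top at_right_end"
    and c: "0 < tail_rate M c" "ereal c < right_end M"
  shows "eventually (\<lambda>x. cramer M x \<le> ereal (tail_rate M x)) at_right_end"
proof -
  have "eventually (\<lambda>x. - ln (measure M {..c}) \<le> tail_rate M x) at_right_end"
    using fl unfolding filterlim_at_top by auto
  with eventually_gt_at_right_end[OF c(2)] eventually_less_right_end show ?thesis
  proof eventually_elim
    case (elim x)
    have "cramer M x \<le> ereal (max (tail_rate M x) (- ln (measure M {..c})))"
      using elim measure_atMost_pos[OF c(1)]
      by (intro cramer_le_max_tail_rate measure_atLeast_pos cramer_term_neg_le) auto
    thus ?case using elim by simp
  qed
qed

lemma cramer_ge_of_exponential_tail: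
  assumes \<sigma>: "0 < \<sigma>" and \<eta>: "0 < \<eta>" "\<eta> < 1"
    and tail: "\<And>y. z \<le> y \<Longrightarrow> measure M {y..} \<le> exp (- (w + \<sigma> * (y - z)))"
  shows "ereal ((1 - \<eta>) * \<sigma> * (x - z) - ln (1 + exp (1 - w) / (1 - exp (- (\<eta> / (1 - \<eta>))))))
           \<le> cramer M x"
proof -
  define t where "t = (1 - \<eta>) * \<sigma>"
  define c where "c = \<eta> / (1 - \<eta>)"
  define K where "K = 1 + exp (1 - w) / (1 - exp (- c))"
  have t: "0 < t" unfolding t_def using \<sigma> \<eta> by simp
  have c: "0 < c" unfolding c_def using \<eta> by simp
  have K: "0 < K" unfolding K_def using c by (simp add: add_pos_nonneg)
  have \<sigma>_t: "\<sigma> * (real k / t) = real k + c * real k" for k :: nat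
    unfolding t_def c_def using \<sigma> \<eta> by (simp add: field_simps)
  have "exp (t * z + real k) * measure M {z + real k / t..} \<le> exp (t * z - w) * exp (- c * real k)"
    for k :: nat
  proof -
    have "exp (t * z + real k) * measure M {z + real k / t..}
        \<le> exp (t * z + real k) * exp (- (w + \<sigma> * (real k / t)))"
      using tail[of "z + real k / t"] t by (intro mult_left_mono) auto
    also have "\<dots> = exp (t * z - w) * exp (- c * real k)"
      using \<sigma>_t[of k] by (simp add: algebra_simps flip: exp_add)
    finally show ?thesis .
  qed
  hence "mgf M t \<le> ennreal (exp (t * z) + exp 1 * exp (t * z - w) / (1 - exp (- c)))"
    using t c by (intro mgf_le_of_grid) auto
  also have "exp (t * z) + exp 1 * exp (t * z - w) / (1 - exp (- c)) = exp (t * z) * K"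
  proof -
    have "exp 1 * exp (t * z - w) = exp (t * z) * exp (1 - w)" by (simp flip: exp_add)
    thus ?thesis unfolding K_def by (simp add: distrib_left)
  qed
  finally have "ereal (t * x - ln (exp (t * z) * K)) \<le> cramer M x" by (rule cramer_ge_of_mgf_le)
  moreover have "t * x - ln (exp (t * z) * K) = (1 - \<eta>) * \<sigma> * (x - z) - ln K"
    using K by (simp add: ln_mult t_def algebra_simps)
  ultimately show ?thesis unfolding K_def c_def by simp
qed

text \<open>A convex minorant of the tail rate has a supporting line at \<open>x\<close>, which turns into an
  exponential tail bound beyond the point \<open>z\<close> where that line takes the value \<open>W b\<close>.\<close>

lemma cramer_ge_of_convex_minorant:
  assumes conv: "convex_on {y. ereal a < ereal y \<and> ereal y < right_end M} W"
    and minorant: "\<And>y. a < y \<Longrightarrow> ereal y < right_end M \<Longrightarrow> W y \<le> tail_rate M y"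
    and null: "\<And>y. right_end M \<le> ereal y \<Longrightarrow> measure M {y..} = 0"
    and ab: "a < b" and bx: "b < x" "ereal x < right_end M" and W: "W b < W x"
    and \<eta>: "0 < \<eta>" "\<eta> < 1"
  shows "ereal ((1 - \<eta>) * (W x - W b) - ln (1 + exp (1 - W b) / (1 - exp (- (\<eta> / (1 - \<eta>))))))
           \<le> cramer M x"
proof -
  define S where "S = {y. ereal a < ereal y \<and> ereal y < right_end M}"
  obtain r where r: "x < r" "ereal r < right_end M" using ereal_dense2[OF bx(2)] by auto
  have "ereal b < right_end M" using order.strict_trans[of "ereal b" "ereal x"] bx by simp
  hence S: "b \<in> S" "x \<in> S" "r \<in> S"
    using ab bx r unfolding S_def by auto
  obtain \<sigma> where \<sigma>: "\<And>y. y \<in> S \<Longrightarrow> W x + \<sigma> * (y - x) \<le> W y"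
    using convex_on_supporting_line[OF conv[folded S_def] S(2) S(1) bx(1) S(3) r(1)] by blast
  have "0 < \<sigma> * (x - b)" using \<sigma>[OF S(1)] W by (simp add: algebra_simps)
  hence \<sigma>_pos: "0 < \<sigma>" using bx(1) by (simp add: zero_less_mult_iff)
  define z where "z = x - (W x - W b) / \<sigma>"
  have line: "W x - W b = \<sigma> * (x - z)" unfolding z_def using \<sigma>_pos by simp
  have "W x - W b \<le> \<sigma> * (x - b)" using \<sigma>[OF S(1)] by (simp add: algebra_simps)
  hence "(W x - W b) / \<sigma> \<le> x - b" using \<sigma>_pos by (simp add: pos_divide_le_eq mult.commute)
  hence bz: "b \<le> z" unfolding z_def by simp
  have tail: "measure M {y..} \<le> exp (- (W b + \<sigma> * (y - z)))" if "z \<le> y" for y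
  proof (cases "ereal y < right_end M")
    case True
    hence "y \<in> S" using ab bz that unfolding S_def by auto
    have "W b + \<sigma> * (y - z) = W x + \<sigma> * (y - x)" using line by (simp add: algebra_simps)
    also have "\<dots> \<le> W y" using \<sigma>[OF \<open>y \<in> S\<close>] .
    also have "\<dots> \<le> tail_rate M y" using minorant True \<open>y \<in> S\<close> unfolding S_def by auto
    finally show ?thesis using measure_atLeast_eq_exp[OF True] by simp
  next
    case False thus ?thesis using null by (simp add: not_less)
  qed
  show ?thesis
    using cramer_ge_of_exponential_tail[OF \<sigma>_pos \<eta> tail, of x] line by (simp add: mult.assoc)
qed

lemma convex_minorant_of_equivalent:
  assumes a: "ereal a < right_end M"
    and conv: "convex_on {x. ereal a < ereal x \<and> ereal x < right_end M} V"
    and lim: "((\<lambda>x. tail_rate M x / V x) \<longlongrightarrow> 1) at_right_end" and \<eta>: "0 < \<eta>" "\<eta> < 1"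
  obtains a' W where "ereal a' < right_end M" "convex_on {x. ereal a' < ereal x \<and> ereal x < right_end M} W"
    "\<And>x. a' < x \<Longrightarrow> ereal x < right_end M \<Longrightarrow> W x \<le> tail_rate M x \<and> (1 - \<eta>)\<^sup>2 * tail_rate M x \<le> W x"
proof -
  have "eventually (\<lambda>x. 0 < V x \<and> (1 - \<eta>) * V x \<le> tail_rate M x \<and> tail_rate M x \<le> (1 + \<eta>) * V x)
          at_right_end"
    using tendsto_ratio_oneD[OF lim eventually_tail_rate_nonneg \<eta>] by (rule eventually_mono) simp
  then obtain b where b: "ereal b < right_end M"
    and bounds: "\<And>x. b < x \<Longrightarrow> ereal x < right_end M \<Longrightarrow>
                   0 < V x \<and> (1 - \<eta>) * V x \<le> tail_rate M x \<and> tail_rate M x \<le> (1 + \<eta>) * V x"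
    unfolding eventually_at_right_end by blast
  define a' where "a' = max a b"
  show thesis
  proof (rule that[of a' "\<lambda>x. (1 - \<eta>) * V x"])
    show "ereal a' < right_end M" using a b unfolding a'_def by (simp add: max_def)
    show "convex_on {x. ereal a' < ereal x \<and> ereal x < right_end M} (\<lambda>x. (1 - \<eta>) * V x)"
      using \<eta> by (intro convex_on_cmul convex_on_subset[OF conv] convex_ereal_interval) (auto simp: a'_def)
    fix x assume "a' < x" "ereal x < right_end M"
    hence Vx: "0 < V x" "(1 - \<eta>) * V x \<le> tail_rate M x" "tail_rate M x \<le> (1 + \<eta>) * V x"
      using bounds[of x] by (auto simp: a'_def)
    have "(1 - \<eta>) * tail_rate M x \<le> (1 - \<eta>) * ((1 + \<eta>) * V x)" using Vx \<eta> by (intro mult_left_mono) auto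
    also have "\<dots> = V x - \<eta>\<^sup>2 * V x" by (simp add: algebra_simps power2_eq_square)
    also have "\<dots> \<le> V x" using Vx by simp
    finally have "(1 - \<eta>) * ((1 - \<eta>) * tail_rate M x) \<le> (1 - \<eta>) * V x" using \<eta> by (intro mult_left_mono) auto
    thus "(1 - \<eta>) * V x \<le> tail_rate M x \<and> (1 - \<eta>)\<^sup>2 * tail_rate M x \<le> (1 - \<eta>) * V x"
      using Vx by (simp add: power2_eq_square mult.assoc)
  qed
qed

lemma eventually_cramer_ge_of_filterlim:
  assumes fl: "filterlim (tail_rate M) at_top at_right_end" and a: "ereal a < right_end M"
    and conv: "convex_on {x. ereal a < ereal x \<and> ereal x < right_end M} V"
    and lim: "((\<lambda>x. tail_rate M x / V x) \<longlongrightarrow> 1) at_right_end" and e: "0 < e" "e < 1"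
  shows "eventually (\<lambda>x. ereal ((1 - e) * tail_rate M x) \<le> cramer M x) at_right_end"
proof -
  define \<eta> where "\<eta> = e / 4"
  have \<eta>: "0 < \<eta>" "\<eta> < 1" unfolding \<eta>_def using e by auto
  have e_le: "1 - e \<le> (1 - \<eta>) ^ 3 - \<eta>"
    using Bernoulli_inequality[of "- \<eta>" 3] \<eta> unfolding \<eta>_def by simp
  obtain a' W where a': "ereal a' < right_end M"
    and convW: "convex_on {x. ereal a' < ereal x \<and> ereal x < right_end M} W"
    and W: "\<And>x. a' < x \<Longrightarrow> ereal x < right_end M \<Longrightarrow> W x \<le> tail_rate M x \<and> (1 - \<eta>)\<^sup>2 * tail_rate M x \<le> W x"
    using convex_minorant_of_equivalent[OF a conv lim \<eta>] by blast
  have minorant: "W y \<le> tail_rate M y" if "a' < y" "ereal y < right_end M" for y using W[OF that] by simp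
  obtain b0 where b0: "a' < b0" "ereal b0 < right_end M"
    using eventually_happens'[OF at_right_end_neq_bot
        eventually_conj[OF eventually_gt_at_right_end[OF a'] eventually_less_right_end]] by blast
  define K where "K = ln (1 + exp (1 - W b0) / (1 - exp (- (\<eta> / (1 - \<eta>)))))"
  define Z where "Z = max ((W b0 + 1) / (1 - \<eta>)\<^sup>2) (((1 - \<eta>) * W b0 + K) / \<eta>)"
  have "eventually (\<lambda>x. Z \<le> tail_rate M x) at_right_end" using fl unfolding filterlim_at_top by auto
  with eventually_gt_at_right_end[OF b0(2)] eventually_less_right_end show ?thesis
  proof eventually_elim
    case (elim x)
    define I where "I = tail_rate M x"
    have WI: "(1 - \<eta>)\<^sup>2 * I \<le> W x" using W[of x] elim b0 unfolding I_def by auto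
    have "(W b0 + 1) / (1 - \<eta>)\<^sup>2 \<le> I" "((1 - \<eta>) * W b0 + K) / \<eta> \<le> I"
      using elim unfolding Z_def I_def by simp_all
    hence Z1: "W b0 + 1 \<le> (1 - \<eta>)\<^sup>2 * I" and Z2: "(1 - \<eta>) * W b0 + K \<le> \<eta> * I"
      using \<eta> by (simp_all add: pos_divide_le_eq mult.commute)
    have "W b0 < W x" using WI Z1 by simp
    have low: "ereal ((1 - \<eta>) * (W x - W b0) - K) \<le> cramer M x"
      unfolding K_def
      by (rule cramer_ge_of_convex_minorant[OF convW minorant measure_atLeast_eq_0_of_filterlim[OF fl]
            b0(1) elim(1,2) \<open>W b0 < W x\<close> \<eta>])
    have "0 \<le> I" unfolding I_def using elim(2) by (rule tail_rate_nonneg)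
    hence "(1 - e) * I \<le> (1 - \<eta>) ^ 3 * I - \<eta> * I"
      using e_le by (simp add: mult_right_mono flip: left_diff_distrib)
    moreover have "(1 - \<eta>) * ((1 - \<eta>)\<^sup>2 * I) \<le> (1 - \<eta>) * W x" using WI \<eta> by (intro mult_left_mono) auto
    hence "(1 - \<eta>) ^ 3 * I \<le> (1 - \<eta>) * W x" by (simp add: power3_eq_cube power2_eq_square mult.assoc)
    ultimately have "(1 - e) * I \<le> (1 - \<eta>) * (W x - W b0) - K"
      using Z2 unfolding right_diff_distrib by linarith
    hence "ereal ((1 - e) * I) \<le> ereal ((1 - \<eta>) * (W x - W b0) - K)" by simp
    thus ?case using low unfolding I_def by (rule order_trans)
  qed
qed

lemma atom_of_not_filterlim:
  assumes "\<not> filterlim (tail_rate M) at_top at_right_end"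
  obtains u where "right_end M = ereal u" "0 < measure M {u..}"
proof -
  obtain Z where Z: "\<not> eventually (\<lambda>x. Z \<le> tail_rate M x) at_right_end"
    using assms unfolding filterlim_at_top by blast
  have bound: "tail_rate M x \<le> Z" if x: "ereal x < right_end M" for x
  proof (rule ccontr)
    assume "\<not> tail_rate M x \<le> Z"
    hence "eventually (\<lambda>y. Z \<le> tail_rate M y) at_right_end"
      unfolding eventually_at_right_end using x tail_rate_mono
      by (intro exI[of _ x]) (smt (verit) less_imp_le)
    thus False using Z by simp
  qed
  have "right_end M \<noteq> \<infinity>"
  proof
    assume "right_end M = \<infinity>"
    obtain y where "measure M {y..} < exp (- Z)" using measure_atLeast_less[of "exp (- Z)"] by auto
    moreover have "exp (- Z) \<le> measure M {y..}"
      using bound[of y] measure_atLeast_eq_exp[of y] \<open>right_end M = \<infinity>\<close> by simp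
    ultimately show False by simp
  qed
  then obtain u where u: "right_end M = ereal u" using right_end_neq_MInf by (cases "right_end M") auto
  have "exp (- Z) \<le> measure M {u..}"
  proof (rule tendsto_lowerbound[OF tendsto_measure_atLeast_at_left])
    show "eventually (\<lambda>x. exp (- Z) \<le> measure M {x..}) (at_left u)"
      unfolding eventually_at_left_field using bound measure_atLeast_eq_exp u
      by (intro exI[of _ "u - 1"]) auto
  qed simp
  hence "0 < measure M {u..}" using exp_gt_zero[of "- Z"] by linarith
  thus thesis using u that by blast
qed

lemma cramer_le_tail_rate_of_atom:
  assumes u: "right_end M = ereal u" and c: "0 < tail_rate M c" "c < u"
  shows "eventually (\<lambda>x. cramer M x \<le> ereal (tail_rate M x)) at_right_end"
proof -
  define L where "L = - ln (measure M {..c})"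
  have "ereal c < right_end M" using u c by simp
  hence "eventually (\<lambda>x. c < x) at_right_end" by (rule eventually_gt_at_right_end)
  moreover have "eventually (\<lambda>x. L * (u - x) / (u - c) < tail_rate M c) at_right_end"
  proof -
    have "((\<lambda>x. L * (u - x) / (u - c)) \<longlongrightarrow> L * (u - u) / (u - c)) (at_left u)"
      using c by (intro tendsto_intros) auto
    thus ?thesis using c u by (simp add: to_right_end_def order_tendstoD(2))
  qed
  ultimately show ?thesis using eventually_less_right_end
  proof eventually_elim
    case (elim x)
    have "tail_rate M c \<le> tail_rate M x" using elim by (intro tail_rate_mono) auto
    moreover have "cramer M x \<le> ereal (max (tail_rate M x) (L * (u - x) / (u - c)))"
      using elim u measure_atMost_pos[OF c(1)] unfolding L_def
      by (intro cramer_le_max_tail_rate measure_atLeast_pos cramer_term_neg_le_atom) auto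
    ultimately show ?case using elim by simp
  qed
qed

lemma eventually_cramer_le_tail_rate:
  assumes pos: "eventually (\<lambda>x. 0 < tail_rate M x) at_right_end"
  shows "eventually (\<lambda>x. cramer M x \<le> ereal (tail_rate M x)) at_right_end"
proof -
  obtain c where c: "0 < tail_rate M c" "ereal c < right_end M"
    using eventually_happens'[OF at_right_end_neq_bot eventually_conj[OF pos eventually_less_right_end]]
    by blast
  show ?thesis
  proof (cases "filterlim (tail_rate M) at_top at_right_end")
    case True thus ?thesis using cramer_le_tail_rate_of_filterlim c by blast
  next
    case False
    then obtain u where "right_end M = ereal u" by (rule atom_of_not_filterlim)
    thus ?thesis using cramer_le_tail_rate_of_atom c by auto
  qed
qed

lemma mgf_le_near_atom:
  assumes u: "right_end M = ereal u" and q: "0 < measure M {u..}" and \<epsilon>: "0 < \<epsilon>"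
  obtains t where "0 < t" "mgf M t \<le> ennreal (exp (t * u) * (measure M {u..} * (1 + \<epsilon>)))"
proof -
  define q where "q = measure M {u..}"
  have "eventually (\<lambda>x. measure M {x..} < q * (1 + \<epsilon> / 2)) (at_left u)"
    using q \<epsilon> unfolding q_def by (intro order_tendstoD(2)[OF tendsto_measure_atLeast_at_left]) simp
  then obtain b where b: "b < u" "\<And>y. b < y \<Longrightarrow> y < u \<Longrightarrow> measure M {y..} < q * (1 + \<epsilon> / 2)"
    unfolding eventually_at_left_field by blast
  define d where "d = (u - b) / 2"
  have "b < u - d" "u - d < u" using b(1) by (simp_all add: d_def field_simps)
  hence d: "0 < d" "measure M {u - d..} < q * (1 + \<epsilon> / 2)" using b(2) by auto
  define t where "t = max 1 (- ln (q * \<epsilon> / 2) / d)"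
  have t: "0 < t" unfolding t_def by simp
  have "- ln (q * \<epsilon> / 2) / d \<le> t" unfolding t_def by simp
  hence "- ln (q * \<epsilon> / 2) \<le> t * d" by (simp only: pos_divide_le_eq[OF d(1)])
  hence "exp (- t * d) \<le> exp (ln (q * \<epsilon> / 2))" by simp
  also have "\<dots> = q * \<epsilon> / 2" using q \<epsilon> unfolding q_def by simp
  finally have "exp (- t * d) + measure M {u - d..} \<le> q * (1 + \<epsilon>)"
    using d(2) by (simp add: algebra_simps)
  hence "mgf M t \<le> ennreal (exp (t * u) * (q * (1 + \<epsilon>)))"
    using mgf_le_atom[OF u t d(1)] by (meson ennreal_leI exp_ge_zero mult_left_mono order_trans)
  thus thesis using that t unfolding q_def by blast
qed

lemma cramer_ge_near_atom:
  assumes u: "right_end M = ereal u" and q: "0 < measure M {u..}" and \<eta>: "0 < \<eta>"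
  shows "eventually (\<lambda>x. ereal (tail_rate M u - \<eta>) \<le> cramer M x) at_right_end"
proof -
  obtain t where t: "0 < t" "mgf M t \<le> ennreal (exp (t * u) * (measure M {u..} * (1 + \<eta> / 2)))"
    using mgf_le_near_atom[OF u q, of "\<eta> / 2"] \<eta> by auto
  have "((\<lambda>x. t * (u - x)) \<longlongrightarrow> t * (u - u)) (at_left u)" by (intro tendsto_intros)
  hence "eventually (\<lambda>x. t * (u - x) < \<eta> / 2) (at_left u)"
    by (rule order_tendstoD(2)) (use \<eta> in simp)
  hence "eventually (\<lambda>x. t * (u - x) < \<eta> / 2) at_right_end"
    using u by (simp add: to_right_end_def)
  thus ?thesis
  proof eventually_elim
    case (elim x)
    have "ln (exp (t * u) * (measure M {u..} * (1 + \<eta> / 2))) = t * u - tail_rate M u + ln (1 + \<eta> / 2)"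
      using q \<eta> by (simp add: ln_mult tail_rate_def)
    moreover have "ln (1 + \<eta> / 2) \<le> \<eta> / 2" using \<eta> by (intro ln_add_one_self_le_self) simp
    ultimately have "tail_rate M u - \<eta> \<le> t * x - ln (exp (t * u) * (measure M {u..} * (1 + \<eta> / 2)))"
      using elim by (simp add: algebra_simps)
    hence "ereal (tail_rate M u - \<eta>)
             \<le> ereal (t * x - ln (exp (t * u) * (measure M {u..} * (1 + \<eta> / 2))))" by simp
    thus ?case using cramer_ge_of_mgf_le[OF t(2), of x] by (rule order_trans)
  qed
qed

lemma cramer_ge_tail_rate_of_atom:
  assumes u: "right_end M = ereal u" and q: "0 < measure M {u..}"
    and pos: "eventually (\<lambda>x. 0 < tail_rate M x) at_right_end" and e: "0 < e" "e < 1"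
  shows "eventually (\<lambda>x. ereal ((1 - e) * tail_rate M x) \<le> cramer M x) at_right_end"
proof -
  have le_u: "tail_rate M x \<le> tail_rate M u" if "x \<le> u" for x
  proof -
    have "measure M {u..} \<le> measure M {x..}" using that by (intro finite_measure_mono) auto
    thus ?thesis using q unfolding tail_rate_def by simp
  qed
  obtain c where "0 < tail_rate M c" "ereal c < right_end M"
    using eventually_happens'[OF at_right_end_neq_bot eventually_conj[OF pos eventually_less_right_end]]
    by blast
  hence I_u: "0 < tail_rate M u" using le_u[of c] u by simp
  have "eventually (\<lambda>x. ereal (tail_rate M u - e * tail_rate M u) \<le> cramer M x) at_right_end"
    using e I_u by (intro cramer_ge_near_atom[OF u q]) simp
  with eventually_less_right_end show ?thesis
  proof eventually_elim
    case (elim x)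
    have "(1 - e) * tail_rate M x \<le> (1 - e) * tail_rate M u"
      using elim u le_u[of x] e by (intro mult_left_mono) auto
    hence "ereal ((1 - e) * tail_rate M x) \<le> ereal (tail_rate M u - e * tail_rate M u)"
      by (simp add: algebra_simps)
    thus ?case using elim(2) by (rule order_trans)
  qed
qed

lemma ex_convex_equivalent_of_tendsto_cramer:
  assumes lim: "((\<lambda>x. ereal (tail_rate M x) / cramer M x) \<longlongrightarrow> ereal 1) at_right_end"
  shows "\<exists>a V. ereal a < right_end M \<and> convex_on {x. ereal a < ereal x \<and> ereal x < right_end M} V
           \<and> ((\<lambda>x. tail_rate M x / V x) \<longlongrightarrow> 1) at_right_end"
proof -
  have "eventually (\<lambda>x. ereal (1 / 2) < ereal (tail_rate M x) / cramer M x
                       \<and> ereal (tail_rate M x) / cramer M x < ereal 2) at_right_end"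
    using lim by (intro eventually_conj order_tendstoD) auto
  hence "eventually (\<lambda>x. \<exists>v>0. cramer M x = ereal v) at_right_end"
    by (rule eventually_mono) (use pos_real_of_ereal_ratio cramer_nonneg in blast)
  then obtain a where a: "ereal a < right_end M"
    and fin: "\<And>x. a < x \<Longrightarrow> ereal x < right_end M \<Longrightarrow> \<exists>v>0. cramer M x = ereal v"
    unfolding eventually_at_right_end by blast
  define V where "V x = real_of_ereal (cramer M x)" for x
  have V: "cramer M x = ereal (V x) \<and> 0 < V x" if "a < x" "ereal x < right_end M" for x
    using fin[OF that] by (auto simp: V_def)
  have conv: "convex_on {x. ereal a < ereal x \<and> ereal x < right_end M} V"
    by (rule convex_on_cramer[OF convex_ereal_interval]) (use V in auto)
  have "eventually (\<lambda>x. ereal (tail_rate M x) / cramer M x = ereal (tail_rate M x / V x)) at_right_end"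
    unfolding eventually_at_right_end
  proof (intro exI[of _ a] conjI allI impI a)
    fix x assume "a < x" "ereal x < right_end M"
    hence "cramer M x = ereal (V x)" "0 < V x" using V by auto
    thus "ereal (tail_rate M x) / cramer M x = ereal (tail_rate M x / V x)" by simp
  qed
  with lim have "((\<lambda>x. ereal (tail_rate M x / V x)) \<longlongrightarrow> ereal 1) at_right_end"
    by (rule Lim_transform_eventually)
  hence "((\<lambda>x. tail_rate M x / V x) \<longlongrightarrow> 1) at_right_end" by simp
  thus ?thesis using a conv by blast
qed

lemma tendsto_cramer_of_convex_equivalent:
  assumes a: "ereal a < right_end M"
    and conv: "convex_on {x. ereal a < ereal x \<and> ereal x < right_end M} V"
    and lim: "((\<lambda>x. tail_rate M x / V x) \<longlongrightarrow> 1) at_right_end"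
  shows "((\<lambda>x. ereal (tail_rate M x) / cramer M x) \<longlongrightarrow> ereal 1) at_right_end"
proof (rule tendsto_ereal_ratio_one)
  have pos: "eventually (\<lambda>x. 0 < tail_rate M x) at_right_end"
    using tendsto_ratio_oneD[OF lim eventually_tail_rate_nonneg, of "1 / 2"] by (auto elim: eventually_mono)
  show "eventually (\<lambda>x. 0 < tail_rate M x \<and> cramer M x \<le> ereal (tail_rate M x)) at_right_end"
    using pos eventually_cramer_le_tail_rate[OF pos] by (rule eventually_conj)
  fix e :: real assume e: "0 < e" "e < 1"
  show "eventually (\<lambda>x. ereal ((1 - e) * tail_rate M x) \<le> cramer M x) at_right_end"
  proof (cases "filterlim (tail_rate M) at_top at_right_end")
    case True thus ?thesis using eventually_cramer_ge_of_filterlim a conv lim e by blast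
  next
    case False
    then obtain u where "right_end M = ereal u" "0 < measure M {u..}" by (rule atom_of_not_filterlim)
    thus ?thesis using cramer_ge_tail_rate_of_atom pos e by blast
  qed
qed

end

theorem theorem1p2:
  fixes M :: "real measure"
  assumes "prob_space M" and "sets M = sets borel"
  shows "((\<lambda>x. ereal (- ln (measure M {x..})) / cramer M x) \<longlongrightarrow> ereal 1)
            (to_right_end (right_end M))
     \<longleftrightarrow> (\<exists>a::real. \<exists>V::real \<Rightarrow> real. ereal a < right_end M \<and>
            convex_on {x. ereal a < ereal x \<and> ereal x < right_end M} V \<and>
            ((\<lambda>x. - ln (measure M {x..}) / V x) \<longlongrightarrow> 1) (to_right_end (right_end M)))"
proof -
  interpret real_distribution M
    using assms by (simp add: real_distribution_def real_distribution_axioms_def)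
  show ?thesis
    unfolding tail_rate_def[symmetric]
    using ex_convex_equivalent_of_tendsto_cramer tendsto_cramer_of_convex_equivalent by blast
qed

end
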